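(* Let $Q$ be a positive definite quadratic form on $\mathbb{R}^2$, let $\Lambda\subseteq\mathbb{R}^2$ be a lattice of rank $2$, and let $v\in\mathbb{R}^2$. Let $c=\min_{w\in\Lambda}Q(v-w)$ and $\lambda=\min_{w\in\Lambda\setminus\{0\}}Q(w)$. Then there exists a set $P\subseteq\Lambda$ of four points forming the vertices of a translated fundamental parallelogram of $\Lambda$ (i.e. $P=\{w_0,w_0+u_1,w_0+u_2,w_0+u_1+u_2\}$ with $w_0\in\Lambda$ and $u_1,u_2$ a basis of $\Lambda$) such that $Q(v-w)\ge c+\lambda$ for all $w\in\Lambda\setminus P$. *)

theory Defs
  imports "HOL-Analysis.Analysis"
begin

definition pos_def_quadratic_form :: "(real^2 \<Rightarrow> real) \<Rightarrow> bool" where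
  "pos_def_quadratic_form Q \<longleftrightarrow>
     (\<exists>A :: real^2^2. transpose A = A \<and> Q = (\<lambda>x. x \<bullet> (A *v x))) \<and>
     (\<forall>x. x \<noteq> 0 \<longrightarrow> Q x > 0)"

definition int_span2 :: "real^2 \<Rightarrow> real^2 \<Rightarrow> (real^2) set" where
  "int_span2 u1 u2 = {of_int m *\<^sub>R u1 + of_int n *\<^sub>R u2 | m n :: int. True}"

definition lattice_basis :: "(real^2) set \<Rightarrow> real^2 \<Rightarrow> real^2 \<Rightarrow> bool" where
  "lattice_basis L u1 u2 \<longleftrightarrow> u1 \<noteq> u2 \<and> independent {u1, u2} \<and> L = int_span2 u1 u2"

definition rank2_lattice :: "(real^2) set \<Rightarrow> bool" where
  "rank2_lattice L \<longleftrightarrow> (\<exists>u1 u2. lattice_basis L u1 u2)"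

end

theory Submission
  imports Defs
begin

(*
  Let S be the set of lattice points w with Q (v - w) < c + \<lambda>. If a lattice point p other than
  q, r, s \<in> S is a convex combination p = \<alpha> q + \<beta> r + \<gamma> s, the parallel axis identity

    \<alpha> Q (v - q) + \<beta> Q (v - r) + \<gamma> Q (v - s) = Q (v - p) + \<alpha> Q (q - p) + \<beta> Q (r - p) + \<gamma> Q (s - p)

  has left side below c + \<lambda> and right side at least c + \<lambda>. So no triangle with vertices in S
  contains further lattice points. In particular the difference of two points of S is primitive,
  and in lattice coordinates in which these points are (0, 0) and (1, 0), all of S lies in the rows
  y = -1, 0, 1: row 0 is {0, 1}, the other rows consist of at most two adjacent points, and if both
  are occupied they are single points (a, 1), (1 - a, -1). Either way S lies in a unimodular
  parallelogram.
*)

section \<open>Sublevel sets of a quadratic form on a lattice\<close>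

lemma quadratic_form_diff:
  fixes A :: "real^'n^'n"
  shows "(x - y) \<bullet> (A *v (x - y)) = x \<bullet> (A *v x) - x \<bullet> (A *v y) - y \<bullet> (A *v x) + y \<bullet> (A *v y)"
  by (simp add: matrix_vector_mult_diff_distrib inner_diff_left inner_diff_right)

lemma quadratic_form_convex_comb3:
  fixes A :: "real^'n^'n"
  defines "Q \<equiv> \<lambda>x. x \<bullet> (A *v x)"
  assumes "\<alpha> + \<beta> + \<gamma> = 1" and "p = \<alpha> *\<^sub>R q + \<beta> *\<^sub>R r + \<gamma> *\<^sub>R s"
  shows "\<alpha> * Q (v - q) + \<beta> * Q (v - r) + \<gamma> * Q (v - s)
           = Q (v - p) + \<alpha> * Q (q - p) + \<beta> * Q (r - p) + \<gamma> * Q (s - p)"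
proof -
  define a b1 b2 b3 where "a = v - p" and "b1 = q - p" and "b2 = r - p" and "b3 = s - p"
  have "\<alpha> *\<^sub>R b1 + \<beta> *\<^sub>R b2 + \<gamma> *\<^sub>R b3 = p - (\<alpha> + \<beta> + \<gamma>) *\<^sub>R p"
    unfolding b1_def b2_def b3_def using assms(3) by (simp add: algebra_simps)
  then have centred: "\<alpha> *\<^sub>R b1 + \<beta> *\<^sub>R b2 + \<gamma> *\<^sub>R b3 = 0"
    using assms(2) by simp
  have "\<alpha> * (a \<bullet> (A *v b1)) + \<beta> * (a \<bullet> (A *v b2)) + \<gamma> * (a \<bullet> (A *v b3))
      = a \<bullet> (A *v (\<alpha> *\<^sub>R b1 + \<beta> *\<^sub>R b2 + \<gamma> *\<^sub>R b3))"
    by (simp add: matrix_vector_right_distrib matrix_vector_mult_scaleR inner_add_right)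
  then have cross1: "\<alpha> * (a \<bullet> (A *v b1)) + \<beta> * (a \<bullet> (A *v b2)) + \<gamma> * (a \<bullet> (A *v b3)) = 0"
    unfolding centred by simp
  have "\<alpha> * (b1 \<bullet> (A *v a)) + \<beta> * (b2 \<bullet> (A *v a)) + \<gamma> * (b3 \<bullet> (A *v a))
      = (\<alpha> *\<^sub>R b1 + \<beta> *\<^sub>R b2 + \<gamma> *\<^sub>R b3) \<bullet> (A *v a)"
    by (simp add: inner_add_left)
  then have cross2: "\<alpha> * (b1 \<bullet> (A *v a)) + \<beta> * (b2 \<bullet> (A *v a)) + \<gamma> * (b3 \<bullet> (A *v a)) = 0"
    unfolding centred by simp
  have "v - q = a - b1" "v - r = a - b2" "v - s = a - b3"
    unfolding a_def b1_def b2_def b3_def by simp_all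
  moreover have "(\<alpha> + \<beta> + \<gamma>) * (a \<bullet> (A *v a)) = a \<bullet> (A *v a)"
    using assms(2) by simp
  ultimately show ?thesis
    unfolding Q_def a_def[symmetric] b1_def[symmetric] b2_def[symmetric] b3_def[symmetric]
    using cross1 cross2 by (simp add: quadratic_form_diff ring_distribs)
qed

lemma convex_comb3_less:
  fixes x y z :: real
  assumes "0 \<le> \<alpha>" "0 \<le> \<beta>" "0 \<le> \<gamma>" "\<alpha> + \<beta> + \<gamma> = 1" "x < K" "y < K" "z < K"
  shows "\<alpha> * x + \<beta> * y + \<gamma> * z < K"
proof -
  have "\<alpha> * x + \<beta> * y + \<gamma> * z \<le> \<alpha> * max x (max y z) + \<beta> * max x (max y z) + \<gamma> * max x (max y z)"
    using assms(1-3) by (intro add_mono mult_left_mono) auto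
  also have "\<dots> = max x (max y z)"
    using assms(4) by (metis distrib_right mult_1)
  finally show ?thesis
    using assms(5-7) by linarith
qed

lemma convex_comb3_ge:
  fixes x y z :: real
  assumes "0 \<le> \<alpha>" "0 \<le> \<beta>" "0 \<le> \<gamma>" "\<alpha> + \<beta> + \<gamma> = 1" "K \<le> x" "K \<le> y" "K \<le> z"
  shows "K \<le> \<alpha> * x + \<beta> * y + \<gamma> * z"
proof -
  have "\<alpha> * K + \<beta> * K + \<gamma> * K \<le> \<alpha> * x + \<beta> * y + \<gamma> * z"
    using assms by (intro add_mono mult_left_mono) auto
  then show ?thesis
    using assms(4) by (metis distrib_right mult_1)
qed

definition lattice_empty_triangles :: "'a::real_vector set \<Rightarrow> 'a set \<Rightarrow> bool" where
  "lattice_empty_triangles L S \<longleftrightarrow> (\<forall>q\<in>S. \<forall>r\<in>S. \<forall>s\<in>S. L \<inter> convex hull {q, r, s} \<subseteq> {q, r, s})"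

lemma lattice_empty_triangles_sublevel:
  fixes A :: "real^'n^'n" and L :: "(real^'n) set"
  assumes Q: "Q = (\<lambda>x. x \<bullet> (A *v x))"
    and diff_closed: "\<And>p q. p \<in> L \<Longrightarrow> q \<in> L \<Longrightarrow> q - p \<in> L"
    and dist_bound: "\<And>p. p \<in> L \<Longrightarrow> c \<le> Q (v - p)"
    and min_bound: "\<And>x. x \<in> L \<Longrightarrow> x \<noteq> 0 \<Longrightarrow> \<mu> \<le> Q x"
  shows "lattice_empty_triangles L {w \<in> L. Q (v - w) < c + \<mu>}"
  unfolding lattice_empty_triangles_def
proof (intro ballI subsetI)
  fix q r s p
  assume S: "q \<in> {w \<in> L. Q (v - w) < c + \<mu>}" "r \<in> {w \<in> L. Q (v - w) < c + \<mu>}"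
    "s \<in> {w \<in> L. Q (v - w) < c + \<mu>}" and p: "p \<in> L \<inter> convex hull {q, r, s}"
  show "p \<in> {q, r, s}"
  proof (rule ccontr)
    assume new: "p \<notin> {q, r, s}"
    obtain \<alpha> \<beta> \<gamma> where w: "0 \<le> \<alpha>" "0 \<le> \<beta>" "0 \<le> \<gamma>" "\<alpha> + \<beta> + \<gamma> = 1"
      and p_eq: "p = \<alpha> *\<^sub>R q + \<beta> *\<^sub>R r + \<gamma> *\<^sub>R s"
      using p by (auto simp: convex_hull_3)
    have "\<mu> \<le> Q (x - p)" if "x \<in> {q, r, s}" for x
      using min_bound diff_closed that S p new by auto
    then have "\<mu> \<le> \<alpha> * Q (q - p) + \<beta> * Q (r - p) + \<gamma> * Q (s - p)"
      using w by (intro convex_comb3_ge) auto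
    moreover have "\<alpha> * Q (v - q) + \<beta> * Q (v - r) + \<gamma> * Q (v - s) < c + \<mu>"
      using w S by (intro convex_comb3_less) auto
    moreover have "c \<le> Q (v - p)"
      using dist_bound p by blast
    ultimately show False
      using quadratic_form_convex_comb3[OF w(4) p_eq, where A=A and v=v] unfolding Q by linarith
  qed
qed

section \<open>Integer point sets with empty triangles\<close>

definition unimodular :: "int \<times> int \<Rightarrow> int \<times> int \<Rightarrow> bool" where
  "unimodular x y \<longleftrightarrow> \<bar>fst x * snd y - snd x * fst y\<bar> = 1"

(* The convex weights a / (a + b + c), b / (a + b + c), c / (a + b + c) are kept with their common
   denominator cleared, so that the condition stays in \<int>. *)
definition empty_triangles_int :: "(int \<times> int) set \<Rightarrow> bool" where
  "empty_triangles_int T \<longleftrightarrow> (\<forall>q\<in>T. \<forall>r\<in>T. \<forall>s\<in>T. \<forall>p a b c.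
     0 \<le> a \<and> 0 \<le> b \<and> 0 \<le> c \<and> 0 < a + b + c \<and>
     (a + b + c) * fst p = a * fst q + b * fst r + c * fst s \<and>
     (a + b + c) * snd p = a * snd q + b * snd r + c * snd s \<longrightarrow> p \<in> {q, r, s})"

lemma empty_triangles_intD:
  assumes "empty_triangles_int T" "q \<in> T" "r \<in> T" "s \<in> T"
    and "0 \<le> a" "0 \<le> b" "0 \<le> c" "0 < a + b + c"
    and "(a + b + c) * fst p = a * fst q + b * fst r + c * fst s"
    and "(a + b + c) * snd p = a * snd q + b * snd r + c * snd s"
  shows "p \<in> {q, r, s}"
  using assms unfolding empty_triangles_int_def by blast

lemma empty_triangles_int_coprime:
  assumes T: "empty_triangles_int T" and "q \<in> T" "r \<in> T" "q \<noteq> r"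
  shows "coprime (fst r - fst q) (snd r - snd q)"
proof (rule ccontr)
  define m n where "m = fst r - fst q" and "n = snd r - snd q"
  define g where "g = gcd m n"
  assume "\<not> coprime (fst r - fst q) (snd r - snd q)"
  moreover have "m \<noteq> 0 \<or> n \<noteq> 0"
    using \<open>q \<noteq> r\<close> unfolding m_def n_def by (auto simp: prod_eq_iff)
  ultimately have g2: "2 \<le> g"
    using gcd_pos_int[of m n] unfolding g_def m_def n_def coprime_iff_gcd_eq_1 by linarith
  obtain m' n' where m': "m = g * m'" and n': "n = g * n'"
    unfolding g_def by (meson gcd_dvd1 gcd_dvd2 dvdE)
  have "m' \<noteq> 0 \<or> n' \<noteq> 0"
    using \<open>m \<noteq> 0 \<or> n \<noteq> 0\<close> m' n' by auto
  define p where "p = (fst q + m', snd q + n')"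
  have "p \<in> {q, r, q}"
    by (rule empty_triangles_intD[OF T \<open>q \<in> T\<close> \<open>r \<in> T\<close> \<open>q \<in> T\<close>, of "g - 1" 1 0])
      (use g2 m' n' in \<open>auto simp: p_def m_def n_def algebra_simps\<close>)
  moreover have "p \<noteq> q"
    using \<open>m' \<noteq> 0 \<or> n' \<noteq> 0\<close> unfolding p_def by (auto simp: prod_eq_iff)
  moreover have "p \<noteq> r"
  proof
    assume "p = r"
    then have "(g - 1) * m' = 0" "(g - 1) * n' = 0"
      using m' n' unfolding p_def m_def n_def by (auto simp: algebra_simps)
    then show False
      using g2 \<open>m' \<noteq> 0 \<or> n' \<noteq> 0\<close> by simp
  qed
  ultimately show False
    by blast
qed

lemma empty_triangles_int_same_row:
  assumes "empty_triangles_int T" "(x, y) \<in> T" "(x', y) \<in> T"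
  shows "\<bar>x - x'\<bar> \<le> 1"
  using empty_triangles_int_coprime[OF assms] by (cases "x = x'") auto

lemma int_set_subset_consecutive:
  fixes X :: "int set"
  assumes "\<And>x y. x \<in> X \<Longrightarrow> y \<in> X \<Longrightarrow> \<bar>x - y\<bar> \<le> 1"
  shows "\<exists>a. X \<subseteq> {a, a + 1}"
proof (cases "X = {}")
  case False
  then obtain x0 where "x0 \<in> X" by blast
  define a where "a = (if x0 - 1 \<in> X then x0 - 1 else x0)"
  have "x \<in> {a, a + 1}" if "x \<in> X" for x
  proof (cases "x0 - 1 \<in> X")
    case True
    then show ?thesis
      using assms[OF that \<open>x0 \<in> X\<close>] assms[OF that True] unfolding a_def by auto
  next
    case False
    then have "x \<noteq> x0 - 1"
      using that by auto
    then show ?thesis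
      using assms[OF that \<open>x0 \<in> X\<close>] False unfolding a_def by auto
  qed
  then show ?thesis by blast
qed simp

context
  fixes T :: "(int \<times> int) set"
  assumes T: "empty_triangles_int T" and origin: "(0, 0) \<in> T" and unit: "(1, 0) \<in> T"
begin

lemma empty_triangles_int_rows:
  assumes "(x, y) \<in> T"
  shows "y = -1 \<or> y = 0 \<or> y = 1"
proof (rule ccontr)
  define d \<sigma> where "d = \<bar>y\<bar>" and "\<sigma> = sgn y"
  define k x' where "k = x div d" and "x' = x mod d"
  assume "\<not> (y = -1 \<or> y = 0 \<or> y = 1)"
  then have d: "2 \<le> d" "y = d * \<sigma>" "\<sigma> \<noteq> y" "\<sigma> \<noteq> 0"
    unfolding d_def \<sigma>_def by (auto simp: sgn_if)
  have x: "x = d * k + x'" "0 \<le> x'" "x' < d"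
    unfolding k_def x'_def using d(1) by simp_all
  show False
  proof (cases "x' = 0")
    case True
    have "(k, \<sigma>) \<in> {(x, y), (0, 0), (0, 0)}"
      by (rule empty_triangles_intD[OF T assms origin origin, of 1 "d - 1" 0])
        (use d x True in auto)
    then show False using d by auto
  next
    case False
    have "(k + 1, \<sigma>) \<in> {(x, y), (1, 0), (0, 0)}"
      by (rule empty_triangles_intD[OF T assms unit origin, of 1 "d - x'" "x' - 1"])
        (use d x False in \<open>auto simp: algebra_simps\<close>)
    then show False using d by auto
  qed
qed

lemma empty_triangles_int_row0:
  assumes "(x, 0) \<in> T"
  shows "x = 0 \<or> x = 1"
  using empty_triangles_int_same_row[OF T assms origin] empty_triangles_int_same_row[OF T assms unit]
  by linarith

lemma empty_triangles_int_opposite_rows: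
  assumes "(a, 1) \<in> T" "(b, -1) \<in> T"
  shows "a + b = 1"
proof (rule ccontr)
  assume "a + b \<noteq> 1"
  then consider "2 \<le> a + b" | "a + b \<le> 0" by linarith
  then show False
  proof cases
    case 1
    have "(1, 0) \<in> {(a, 1), (b, -1), (0, 0)}"
      using empty_triangles_intD[OF T assms origin, of 1 1 "a + b - 2" "(1, 0)"] 1 by auto
    then show False by auto
  next
    case 2
    have "(0, 0) \<in> {(a, 1), (b, -1), (1, 0)}"
      using empty_triangles_intD[OF T assms unit, of 1 1 "- (a + b)" "(0, 0)"] 2 by auto
    then show False by auto
  qed
qed

lemma empty_triangles_int_both_rows:
  assumes "(a, 1) \<in> T" "(b, -1) \<in> T"
  shows "T \<subseteq> {(0, 0), (a, 1), (b, -1), (1, 0)}"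
proof
  fix z assume "z \<in> T"
  moreover obtain x y where z: "z = (x, y)"
    by fastforce
  ultimately have xy: "(x, y) \<in> T"
    by simp
  have ab: "a + b = 1"
    using empty_triangles_int_opposite_rows[OF assms] .
  show "z \<in> {(0, 0), (a, 1), (b, -1), (1, 0)}"
    using empty_triangles_int_rows[OF xy]
  proof (elim disjE)
    assume "y = -1"
    then show ?thesis
      using empty_triangles_int_opposite_rows[OF assms(1), of x] xy ab z by simp
  next
    assume "y = 0"
    then show ?thesis
      using empty_triangles_int_row0[of x] xy z by auto
  next
    assume "y = 1"
    then show ?thesis
      using empty_triangles_int_opposite_rows[OF _ assms(2), of x] xy ab z by simp
  qed
qed

lemma empty_triangles_int_one_row:
  assumes "\<bar>\<sigma>\<bar> = 1" "\<And>x. (x, - \<sigma>) \<notin> T"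
  shows "\<exists>a. T \<subseteq> {(0, 0), (1, 0), (a, \<sigma>), (a + 1, \<sigma>)}"
proof -
  obtain a where a: "{x. (x, \<sigma>) \<in> T} \<subseteq> {a, a + 1}"
    using int_set_subset_consecutive[of "{x. (x, \<sigma>) \<in> T}"] empty_triangles_int_same_row[OF T]
    by auto
  have "z \<in> {(0, 0), (1, 0), (a, \<sigma>), (a + 1, \<sigma>)}" if "z \<in> T" for z
  proof -
    obtain x y where z: "z = (x, y)"
      by fastforce
    with that have xy: "(x, y) \<in> T"
      by simp
    then have "y = 0 \<or> y = \<sigma>"
      using empty_triangles_int_rows[OF xy] assms by (auto simp: abs_if split: if_splits)
    then show ?thesis
      using empty_triangles_int_row0[of x] a xy z by auto
  qed
  then show ?thesis
    by blast
qed

lemma empty_triangles_int_normalised: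
  "\<exists>a u w. unimodular u w \<and> T \<subseteq> {a, a + u, a + w, a + u + w}"
proof (cases "(\<exists>a. (a, 1) \<in> T) \<and> (\<exists>b. (b, -1) \<in> T)")
  case True
  then obtain a b where "(a, 1) \<in> T" "(b, -1) \<in> T"
    by blast
  then have "T \<subseteq> {(0, 0), (0, 0) + (a, 1), (0, 0) + (b, -1), (0, 0) + (a, 1) + (b, -1)}"
    using empty_triangles_int_both_rows empty_triangles_int_opposite_rows by simp
  moreover have "unimodular (a, 1) (b, -1)"
    using empty_triangles_int_opposite_rows[OF \<open>(a, 1) \<in> T\<close> \<open>(b, -1) \<in> T\<close>]
    unfolding unimodular_def by simp
  ultimately show ?thesis
    by blast
next
  case False
  then obtain \<sigma> :: int where "\<bar>\<sigma>\<bar> = 1" "\<And>x. (x, - \<sigma>) \<notin> T"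
    by (metis abs_neg_one abs_one minus_minus)
  then obtain a where "T \<subseteq> {(0, 0), (1, 0), (a, \<sigma>), (a + 1, \<sigma>)}"
    using empty_triangles_int_one_row by blast
  then have "T \<subseteq> {(0, 0), (0, 0) + (1, 0), (0, 0) + (a, \<sigma>), (0, 0) + (1, 0) + (a, \<sigma>)}"
    by (simp add: add.commute)
  moreover have "unimodular (1, 0) (a, \<sigma>)"
    using \<open>\<bar>\<sigma>\<bar> = 1\<close> unfolding unimodular_def by simp
  ultimately show ?thesis
    by blast
qed

end

section \<open>Lattice coordinates\<close>

definition int_comb2 :: "'a::real_vector \<Rightarrow> 'a \<Rightarrow> int \<times> int \<Rightarrow> 'a" where
  "int_comb2 u1 u2 z = of_int (fst z) *\<^sub>R u1 + of_int (snd z) *\<^sub>R u2"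

lemma int_span2_eq_range: "int_span2 u1 u2 = range (int_comb2 u1 u2)"
  unfolding int_span2_def int_comb2_def image_def by (auto simp: split_paired_Ex)

lemma int_comb2_add: "int_comb2 u1 u2 (z + z') = int_comb2 u1 u2 z + int_comb2 u1 u2 z'"
  by (simp add: int_comb2_def algebra_simps)

lemma int_comb2_diff: "int_comb2 u1 u2 (z - z') = int_comb2 u1 u2 z - int_comb2 u1 u2 z'"
  by (simp add: int_comb2_def algebra_simps)

lemma int_comb2_int_comb2:
  "int_comb2 (int_comb2 u1 u2 x) (int_comb2 u1 u2 y) z
     = int_comb2 u1 u2 (fst z * fst x + snd z * fst y, fst z * snd x + snd z * snd y)"
  by (simp add: int_comb2_def algebra_simps)

lemma int_span2_subset:
  assumes "u1 \<in> int_span2 b1 b2" "u2 \<in> int_span2 b1 b2"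
  shows "int_span2 u1 u2 \<subseteq> int_span2 b1 b2"
  using assms unfolding int_span2_eq_range by (auto simp: int_comb2_int_comb2)

lemma lattice_basis_coeffs_eq_0:
  assumes "lattice_basis L u1 u2" "\<alpha> *\<^sub>R u1 + \<beta> *\<^sub>R u2 = 0"
  shows "\<alpha> = 0 \<and> \<beta> = 0"
proof -
  have "independent {u1, u2}" "u1 \<noteq> u2"
    using assms(1) unfolding lattice_basis_def by auto
  then have "\<forall>c. c u1 *\<^sub>R u1 + c u2 *\<^sub>R u2 = 0 \<longrightarrow> c u1 = 0 \<and> c u2 = 0"
    by (simp add: independent_explicit)
  from this[rule_format, of "\<lambda>x. if x = u1 then \<alpha> else \<beta>"] show ?thesis
    using assms(2) \<open>u1 \<noteq> u2\<close> by simp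
qed

lemma lattice_basis_inj:
  assumes "lattice_basis L u1 u2"
  shows "inj (int_comb2 u1 u2)"
proof (rule injI)
  fix z z' assume "int_comb2 u1 u2 z = int_comb2 u1 u2 z'"
  then have "of_int (fst z - fst z') *\<^sub>R u1 + of_int (snd z - snd z') *\<^sub>R u2 = 0"
    by (simp add: int_comb2_def algebra_simps)
  then have "real_of_int (fst z - fst z') = 0 \<and> real_of_int (snd z - snd z') = 0"
    by (rule lattice_basis_coeffs_eq_0[OF assms])
  then show "z = z'"
    by (simp add: prod_eq_iff)
qed

lemma int_span2_subset_span: "int_span2 u1 u2 \<subseteq> span {u1, u2}"
  unfolding int_span2_def by (auto intro: span_add span_scale span_base)

lemma lattice_basis_unimodular:
  assumes basis: "lattice_basis L u1 u2" and uni: "unimodular x y"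
  shows "lattice_basis L (int_comb2 u1 u2 x) (int_comb2 u1 u2 y)"
proof -
  define b1 b2 where "b1 = int_comb2 u1 u2 x" and "b2 = int_comb2 u1 u2 y"
  define \<delta> where "\<delta> = fst x * snd y - snd x * fst y"
  have \<delta>: "\<delta> * \<delta> = 1"
    using uni unfolding unimodular_def \<delta>_def by (metis abs_mult_self_eq mult_1)
  have "(\<delta> * snd y * fst x + - \<delta> * snd x * fst y, \<delta> * snd y * snd x + - \<delta> * snd x * snd y) = (1, 0)"
       "(- \<delta> * fst y * fst x + \<delta> * fst x * fst y, - \<delta> * fst y * snd x + \<delta> * fst x * snd y) = (0, 1)"
    using \<delta> unfolding \<delta>_def by (simp_all add: algebra_simps)
  then have "u1 = int_comb2 b1 b2 (\<delta> * snd y, - \<delta> * snd x)"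
    and "u2 = int_comb2 b1 b2 (- \<delta> * fst y, \<delta> * fst x)"
    unfolding b1_def b2_def int_comb2_int_comb2 by (simp_all add: int_comb2_def)
  then have u_mem: "u1 \<in> int_span2 b1 b2" "u2 \<in> int_span2 b1 b2"
    unfolding int_span2_eq_range by (metis rangeI)+
  have b_mem: "b1 \<in> int_span2 u1 u2" "b2 \<in> int_span2 u1 u2"
    unfolding b1_def b2_def int_span2_eq_range by simp_all
  have span_eq: "int_span2 b1 b2 = L"
    using basis int_span2_subset[OF u_mem] int_span2_subset[OF b_mem]
    unfolding lattice_basis_def by blast
  have "b1 \<noteq> b2"
    using lattice_basis_inj[OF basis] uni unfolding b1_def b2_def unimodular_def
    by (auto dest: injD)
  have "independent {b1, b2}"
  proof (rule card_le_dim_spanning)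
    show "{b1, b2} \<subseteq> span {u1, u2}"
      using b_mem int_span2_subset_span by blast
    show "span {u1, u2} \<subseteq> span {b1, b2}"
      using u_mem int_span2_subset_span by (intro span_minimal) auto
    show "card {b1, b2} \<le> dim (span {u1, u2})"
      using basis \<open>b1 \<noteq> b2\<close> unfolding lattice_basis_def by (simp add: dim_eq_card_independent)
  qed simp
  then show ?thesis
    using \<open>b1 \<noteq> b2\<close> span_eq unfolding lattice_basis_def b1_def b2_def by blast
qed

lemma lattice_basis_diff_mem:
  assumes "lattice_basis L u1 u2" "p \<in> L" "q \<in> L"
  shows "q - p \<in> L"
proof -
  have L: "L = range (int_comb2 u1 u2)"
    using assms(1) unfolding lattice_basis_def int_span2_eq_range by simp
  obtain z z' where "p = int_comb2 u1 u2 z" "q = int_comb2 u1 u2 z'"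
    using assms(2,3) unfolding L by blast
  then have "q - p = int_comb2 u1 u2 (z' - z)"
    by (simp add: int_comb2_diff)
  then show ?thesis
    unfolding L by simp
qed

lemma lattice_basis_range_translate:
  assumes "lattice_basis L u1 u2" "w0 \<in> L"
  shows "L = range (\<lambda>z. w0 + int_comb2 u1 u2 z)"
proof -
  have L: "L = range (int_comb2 u1 u2)"
    using assms(1) unfolding lattice_basis_def int_span2_eq_range by simp
  then obtain z0 where z0: "w0 = int_comb2 u1 u2 z0"
    using assms(2) by blast
  show ?thesis
    unfolding L
  proof (intro equalityI image_subsetI)
    show "int_comb2 u1 u2 z \<in> range (\<lambda>z. w0 + int_comb2 u1 u2 z)" for z
      using rangeI[of "\<lambda>z. w0 + int_comb2 u1 u2 z" "z - z0"] by (simp add: z0 int_comb2_diff)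
    show "w0 + int_comb2 u1 u2 z \<in> range (int_comb2 u1 u2)" for z
      using rangeI[of "int_comb2 u1 u2" "z0 + z"] by (simp add: z0 int_comb2_add)
  qed
qed

lemma lattice_basis_extend_primitive:
  assumes basis: "lattice_basis L u1 u2" and "coprime (fst d) (snd d)"
  shows "\<exists>b2. lattice_basis L (int_comb2 u1 u2 d) b2"
proof -
  obtain s t where "s * fst d + t * snd d = 1"
    using bezout_int[of "fst d" "snd d"] assms(2) by (auto simp: coprime_iff_gcd_eq_1)
  then have "unimodular d (- t, s)"
    unfolding unimodular_def by (simp add: algebra_simps)
  then show ?thesis
    using lattice_basis_unimodular[OF basis] by blast
qed

section \<open>Sets with empty triangles lie in a fundamental parallelogram\<close>

lemma int_comb2_in_convex_hull:
  fixes a b c :: int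
  assumes "0 \<le> a" "0 \<le> b" "0 \<le> c" "0 < a + b + c"
    and "(a + b + c) * fst p = a * fst q + b * fst r + c * fst s"
    and "(a + b + c) * snd p = a * snd q + b * snd r + c * snd s"
  shows "w0 + int_comb2 u1 u2 p \<in> convex hull
           {w0 + int_comb2 u1 u2 q, w0 + int_comb2 u1 u2 r, w0 + int_comb2 u1 u2 s}"
proof -
  define f where "f z = w0 + int_comb2 u1 u2 z" for z
  define N where "N = real_of_int (a + b + c)"
  have "0 < N"
    using assms(4) unfolding N_def by simp
  have scalar:
    "N * of_int (fst p) = of_int a * of_int (fst q) + of_int b * of_int (fst r) + of_int c * of_int (fst s)"
    "N * of_int (snd p) = of_int a * of_int (snd q) + of_int b * of_int (snd r) + of_int c * of_int (snd s)"
    unfolding N_def using assms(5,6) by (metis of_int_add of_int_mult)+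
  have "N *\<^sub>R f p = N *\<^sub>R w0 + (N * of_int (fst p)) *\<^sub>R u1 + (N * of_int (snd p)) *\<^sub>R u2"
    unfolding f_def int_comb2_def by (simp add: scaleR_add_right)
  also have "\<dots> = of_int a *\<^sub>R f q + of_int b *\<^sub>R f r + of_int c *\<^sub>R f s"
    unfolding scalar unfolding f_def int_comb2_def N_def by (simp add: algebra_simps)
  finally have scaled: "N *\<^sub>R f p = of_int a *\<^sub>R f q + of_int b *\<^sub>R f r + of_int c *\<^sub>R f s" .
  have "f p = inverse N *\<^sub>R (N *\<^sub>R f p)"
    using \<open>0 < N\<close> by simp
  also have "\<dots> = (of_int a / N) *\<^sub>R f q + (of_int b / N) *\<^sub>R f r + (of_int c / N) *\<^sub>R f s"
    unfolding scaled by (simp add: scaleR_add_right divide_inverse_commute)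
  finally have "f p = (of_int a / N) *\<^sub>R f q + (of_int b / N) *\<^sub>R f r + (of_int c / N) *\<^sub>R f s" .
  moreover have "0 \<le> of_int a / N" "0 \<le> of_int b / N" "0 \<le> of_int c / N"
    using assms(1-3) \<open>0 < N\<close> by simp_all
  moreover have "of_int a / N + of_int b / N + of_int c / N = 1"
    using \<open>0 < N\<close> unfolding N_def by (simp flip: add_divide_distrib)
  ultimately have "f p \<in> convex hull {f q, f r, f s}"
    unfolding convex_hull_3 by blast
  then show ?thesis
    unfolding f_def .
qed

lemma lattice_empty_triangles_coords:
  assumes basis: "lattice_basis L u1 u2" and "w0 \<in> L" and S: "lattice_empty_triangles L S"
  shows "empty_triangles_int {z. w0 + int_comb2 u1 u2 z \<in> S}"
  unfolding empty_triangles_int_def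
proof (intro ballI allI impI)
  define f where "f z = w0 + int_comb2 u1 u2 z" for z
  fix q r s p and a b c :: int
  assume "q \<in> {z. w0 + int_comb2 u1 u2 z \<in> S}" "r \<in> {z. w0 + int_comb2 u1 u2 z \<in> S}"
    "s \<in> {z. w0 + int_comb2 u1 u2 z \<in> S}"
  then have in_S: "f q \<in> S" "f r \<in> S" "f s \<in> S"
    unfolding f_def by simp_all
  assume "0 \<le> a \<and> 0 \<le> b \<and> 0 \<le> c \<and> 0 < a + b + c \<and>
    (a + b + c) * fst p = a * fst q + b * fst r + c * fst s \<and>
    (a + b + c) * snd p = a * snd q + b * snd r + c * snd s"
  then have "f p \<in> convex hull {f q, f r, f s}"
    unfolding f_def by (intro int_comb2_in_convex_hull[of a b c]) auto
  moreover have "f p \<in> L"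
    using lattice_basis_range_translate[OF basis \<open>w0 \<in> L\<close>] unfolding f_def by blast
  ultimately have "f p \<in> {f q, f r, f s}"
    using S in_S unfolding lattice_empty_triangles_def by blast
  moreover have "inj f"
    using lattice_basis_inj[OF basis] unfolding f_def inj_def by simp
  ultimately show "p \<in> {q, r, s}"
    by (auto dest: injD)
qed

lemma lattice_empty_triangles_parallelogram_from_edge:
  assumes basis: "lattice_basis L b1 b2" and "S \<subseteq> L" and S: "lattice_empty_triangles L S"
    and "p0 \<in> S" and "p0 + b1 \<in> S"
  shows "\<exists>w0 c1 c2. w0 \<in> L \<and> lattice_basis L c1 c2 \<and> S \<subseteq> {w0, w0 + c1, w0 + c2, w0 + c1 + c2}"
proof -
  define T where "T = {z. p0 + int_comb2 b1 b2 z \<in> S}"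
  have "p0 \<in> L"
    using assms by blast
  have "empty_triangles_int T"
    unfolding T_def using lattice_empty_triangles_coords[OF basis \<open>p0 \<in> L\<close> S] .
  moreover have "(0, 0) \<in> T" "(1, 0) \<in> T"
    unfolding T_def using assms(4,5) by (simp_all add: int_comb2_def)
  ultimately have "\<exists>a x y. unimodular x y \<and> T \<subseteq> {a, a + x, a + y, a + x + y}"
    by (rule empty_triangles_int_normalised)
  then obtain a x y where uni: "unimodular x y" and T: "T \<subseteq> {a, a + x, a + y, a + x + y}"
    by blast
  define w0 where "w0 = p0 + int_comb2 b1 b2 a"
  have "w0 \<in> L"
    using lattice_basis_range_translate[OF basis \<open>p0 \<in> L\<close>] unfolding w0_def by blast
  moreover have "lattice_basis L (int_comb2 b1 b2 x) (int_comb2 b1 b2 y)"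
    using lattice_basis_unimodular[OF basis uni] .
  moreover have "S \<subseteq> {w0, w0 + int_comb2 b1 b2 x, w0 + int_comb2 b1 b2 y,
                       w0 + int_comb2 b1 b2 x + int_comb2 b1 b2 y}"
  proof
    fix w assume "w \<in> S"
    then obtain z where w: "w = p0 + int_comb2 b1 b2 z"
      using lattice_basis_range_translate[OF basis \<open>p0 \<in> L\<close>] \<open>S \<subseteq> L\<close> by blast
    then have "z \<in> {a, a + x, a + y, a + x + y}"
      using T \<open>w \<in> S\<close> unfolding T_def by blast
    then show "w \<in> {w0, w0 + int_comb2 b1 b2 x, w0 + int_comb2 b1 b2 y,
                     w0 + int_comb2 b1 b2 x + int_comb2 b1 b2 y}"
      unfolding w w0_def by (auto simp: int_comb2_add add.assoc)
  qed
  ultimately show ?thesis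
    by blast
qed

lemma lattice_empty_triangles_parallelogram:
  assumes basis: "lattice_basis L u1 u2" and "S \<subseteq> L" and S: "lattice_empty_triangles L S"
  shows "\<exists>w0 b1 b2. w0 \<in> L \<and> lattice_basis L b1 b2 \<and> S \<subseteq> {w0, w0 + b1, w0 + b2, w0 + b1 + b2}"
proof (cases "\<exists>p0\<in>S. \<exists>p1\<in>S. p0 \<noteq> p1")
  case True
  then obtain p0 p1 where "p0 \<in> S" "p1 \<in> S" "p0 \<noteq> p1"
    by blast
  moreover have "p0 \<in> L"
    using \<open>p0 \<in> S\<close> \<open>S \<subseteq> L\<close> by blast
  ultimately obtain d where p1: "p1 = p0 + int_comb2 u1 u2 d"
    using lattice_basis_range_translate[OF basis] \<open>S \<subseteq> L\<close> by blast
  define T where "T = {z. p0 + int_comb2 u1 u2 z \<in> S}"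
  have "empty_triangles_int T"
    unfolding T_def using lattice_empty_triangles_coords[OF basis \<open>p0 \<in> L\<close> S] .
  moreover have "(0, 0) \<in> T" "d \<in> T" "(0, 0) \<noteq> d"
    using \<open>p0 \<in> S\<close> \<open>p1 \<in> S\<close> \<open>p0 \<noteq> p1\<close> unfolding T_def p1 by (auto simp: int_comb2_def)
  ultimately have "coprime (fst d - fst (0::int, 0::int)) (snd d - snd (0::int, 0::int))"
    by (rule empty_triangles_int_coprime)
  then obtain b2 where "lattice_basis L (int_comb2 u1 u2 d) b2"
    using lattice_basis_extend_primitive[OF basis, of d] by auto
  then show ?thesis
    by (rule lattice_empty_triangles_parallelogram_from_edge[OF _ \<open>S \<subseteq> L\<close> S \<open>p0 \<in> S\<close>])
      (use \<open>p1 \<in> S\<close> p1 in simp)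
next
  case False
  have "int_comb2 u1 u2 0 = 0"
    by (simp add: int_comb2_def)
  then have "0 \<in> L"
    using basis unfolding lattice_basis_def int_span2_eq_range by (metis rangeI)
  have "\<exists>w0 \<in> L. S \<subseteq> {w0}"
  proof (cases "S = {}")
    case False
    then obtain w0 where "w0 \<in> S"
      by blast
    then show ?thesis
      using \<open>\<not> (\<exists>p0\<in>S. \<exists>p1\<in>S. p0 \<noteq> p1)\<close> \<open>S \<subseteq> L\<close> by blast
  qed (use \<open>0 \<in> L\<close> in blast)
  then show ?thesis
    using basis by blast
qed

lemma pos_def_quadratic_form_nonneg:
  assumes "pos_def_quadratic_form Q"
  shows "0 \<le> Q x"
  using assms unfolding pos_def_quadratic_form_def by (cases "x = 0") (auto intro: less_imp_le)

theorem lemma4p7: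
  fixes Q :: "real^2 \<Rightarrow> real" and L :: "(real^2) set" and v :: "real^2"
  assumes "pos_def_quadratic_form Q"
    and "rank2_lattice L"
  shows "\<exists>w0 u1 u2. w0 \<in> L \<and> lattice_basis L u1 u2 \<and>
           (\<forall>w \<in> L - {w0, w0 + u1, w0 + u2, w0 + u1 + u2}.
              Q (v - w) \<ge> (INF w'\<in>L. Q (v - w')) + (INF w'\<in>L - {0}. Q w'))"
proof -
  obtain A where Q: "Q = (\<lambda>x. x \<bullet> (A *v x))"
    using assms(1) unfolding pos_def_quadratic_form_def by blast
  obtain u1 u2 where basis: "lattice_basis L u1 u2"
    using assms(2) unfolding rank2_lattice_def by blast
  note Q_nonneg = pos_def_quadratic_form_nonneg[OF assms(1)]
  define c \<mu> where "c = (INF w'\<in>L. Q (v - w'))" and "\<mu> = (INF w'\<in>L - {0}. Q w')"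
  have "{w \<in> L. Q (v - w) < c + \<mu>} \<subseteq> L"
    by blast
  moreover have "lattice_empty_triangles L {w \<in> L. Q (v - w) < c + \<mu>}"
  proof (rule lattice_empty_triangles_sublevel[OF Q])
    show "q - p \<in> L" if "p \<in> L" "q \<in> L" for p q
      using lattice_basis_diff_mem[OF basis that] .
    show "c \<le> Q (v - p)" if "p \<in> L" for p
      unfolding c_def by (rule cINF_lower[OF bdd_belowI2[of _ 0] that]) (rule Q_nonneg)
    show "\<mu> \<le> Q x" if "x \<in> L" "x \<noteq> 0" for x
      unfolding \<mu>_def by (rule cINF_lower[OF bdd_belowI2[of _ 0]]) (use Q_nonneg that in auto)
  qed
  ultimately have "\<exists>w0 b1 b2. w0 \<in> L \<and> lattice_basis L b1 b2 \<and>
      {w \<in> L. Q (v - w) < c + \<mu>} \<subseteq> {w0, w0 + b1, w0 + b2, w0 + b1 + b2}"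
    by (rule lattice_empty_triangles_parallelogram[OF basis])
  then show ?thesis
    unfolding c_def \<mu>_def by (auto simp: not_le[symmetric])
qed

end
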